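(* Let $(K,v)$ be an extremal valued field with value group $\Gamma$. Then for every nonzero convex subgroup $\Delta$ of $\Gamma$, the quotient $\Gamma/\Delta$ is divisible.
   Context: $(K,v)$ with valuation ring $\mathcal{O}_v$ and value group $\Gamma$ (and $v(0)=\infty$) is extremal if for every $n\ge1$ and every $F\in K[X_1,\dots,X_n]$ the set $\{v(F(a_1,\dots,a_n)) : a_i\in\mathcal{O}_v\}\subseteq\Gamma\cup\{\infty\}$ has a maximal element. *)

theory Defs
  imports Main "HOL-Library.Poly_Mapping"
begin

text \<open>A (Krull) valuation on a field K with value group the whole type 'g:
  v is only meaningful on nonzero elements; v 0 is read as infinity.\<close>
definition valuation :: "('a::field \<Rightarrow> 'g::linordered_ab_group_add) \<Rightarrow> bool" where
  "valuation v \<longleftrightarrow>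
     (\<forall>x y. x \<noteq> 0 \<and> y \<noteq> 0 \<longrightarrow> v (x * y) = v x + v y) \<and>
     (\<forall>x y. x \<noteq> 0 \<and> y \<noteq> 0 \<and> x + y \<noteq> 0 \<longrightarrow> min (v x) (v y) \<le> v (x + y)) \<and>
     v ` (UNIV - {0}) = UNIV"

definition val_ring :: "('a::field \<Rightarrow> 'g::linordered_ab_group_add) \<Rightarrow> 'a set" where
  "val_ring v = {x. x = 0 \<or> 0 \<le> v x}"

text \<open>Multivariate polynomials: finitely supported maps from monomials (exponent vectors)
  to coefficients. F lies in K[X_0,...,X_{n-1}] iff all its monomials only use variables below n.\<close>
definition in_vars :: "nat \<Rightarrow> ((nat \<Rightarrow>\<^sub>0 nat) \<Rightarrow>\<^sub>0 'a::zero) \<Rightarrow> bool" where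
  "in_vars n F \<longleftrightarrow> (\<forall>m \<in> Poly_Mapping.keys F. Poly_Mapping.keys m \<subseteq> {..<n})"

definition mpeval :: "((nat \<Rightarrow>\<^sub>0 nat) \<Rightarrow>\<^sub>0 'a::comm_semiring_1) \<Rightarrow> (nat \<Rightarrow> 'a) \<Rightarrow> 'a" where
  "mpeval F a = (\<Sum>m \<in> Poly_Mapping.keys F.
      Poly_Mapping.lookup F m * (\<Prod>i \<in> Poly_Mapping.keys m. a i ^ Poly_Mapping.lookup m i))"

text \<open>Extremal: the set of values v(F(a)), a in O^n, in Gamma \<union> {\<infinity>} (with v 0 = \<infinity>)
  has a maximum: either F has a zero in O^n (value \<infinity>), or some nonzero value is maximal.\<close>
definition extremal :: "('a::field \<Rightarrow> 'g::linordered_ab_group_add) \<Rightarrow> bool" where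
  "extremal v \<longleftrightarrow>
     (\<forall>n::nat. \<forall>F :: (nat \<Rightarrow>\<^sub>0 nat) \<Rightarrow>\<^sub>0 'a. n \<ge> 1 \<and> in_vars n F \<longrightarrow>
        (\<exists>a. (\<forall>i<n. a i \<in> val_ring v) \<and> mpeval F a = 0) \<or>
        (\<exists>a. (\<forall>i<n. a i \<in> val_ring v) \<and> mpeval F a \<noteq> 0 \<and>
           (\<forall>b. (\<forall>i<n. b i \<in> val_ring v) \<and> mpeval F b \<noteq> 0 \<longrightarrow> v (mpeval F b) \<le> v (mpeval F a))))"

definition convex_subgroup :: "'g::linordered_ab_group_add set \<Rightarrow> bool" where
  "convex_subgroup D \<longleftrightarrow>
     0 \<in> D \<and> (\<forall>x\<in>D. \<forall>y\<in>D. x + y \<in> D) \<and> (\<forall>x\<in>D. - x \<in> D) \<and>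
     (\<forall>x\<in>D. \<forall>y\<in>D. \<forall>z. x \<le> z \<and> z \<le> y \<longrightarrow> z \<in> D)"

definition quotient_divisible :: "'g::linordered_ab_group_add set \<Rightarrow> bool" where
  "quotient_divisible D \<longleftrightarrow>
     (\<forall>\<gamma>::'g. \<forall>n::nat. n \<ge> 1 \<longrightarrow> (\<exists>\<delta>. \<gamma> - (\<Sum>_<n. \<delta>) \<in> D))"

end

theory Submission imports Defs begin

text \<open>Suppose \<Gamma>/\<Delta> is not divisible, so that some \<theta> > 0 satisfies \<theta> \<notin> n\<Gamma> + \<Delta> for
  some n \<ge> 1. Take v(a) = \<theta> and v(c) = -(n+1)\<theta>, and consider F(X,Y) = X^n + c (X^n Y - a)^n
  on the valuation ring. Since \<theta> \<notin> n\<Gamma>, the two summands (when nonzero) never have the same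
  value, so F has no zero, and either v(F(x,y)) \<le> -\<theta> < 0 = v(F(1,a)), or n v(x) < \<theta> and
  v(F(x,y)) \<le> n v(x). In the latter case, for 0 < \<delta> = v(d) \<in> \<Delta> the point (x d, a / (x d)^n)
  still lies in the valuation ring, because \<theta> - n v(x) \<notin> \<Delta> exceeds n\<delta>, and there F takes
  the larger value n (v(x) + \<delta>). So the values of F on the valuation ring have no maximum.\<close>

abbreviation ntimes :: "nat \<Rightarrow> 'g::ab_group_add \<Rightarrow> 'g" where
  "ntimes k g \<equiv> (\<Sum>_<k. g)"

section \<open>Evaluating multivariate polynomials\<close>

definition monom_value :: "(nat \<Rightarrow>\<^sub>0 nat) \<Rightarrow> (nat \<Rightarrow> 'a::comm_semiring_1) \<Rightarrow> 'a" where
  "monom_value m p = (\<Prod>i \<in> Poly_Mapping.keys m. p i ^ Poly_Mapping.lookup m i)"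

lemma monom_value_superset:
  assumes "Poly_Mapping.keys m \<subseteq> S" "finite S"
  shows "monom_value m p = (\<Prod>i \<in> S. p i ^ Poly_Mapping.lookup m i)"
  unfolding monom_value_def
  by (rule prod.mono_neutral_left) (use assms in \<open>auto simp: in_keys_iff\<close>)

lemma mpeval_superset:
  assumes "Poly_Mapping.keys F \<subseteq> S" "finite S"
  shows "mpeval F p = (\<Sum>m \<in> S. Poly_Mapping.lookup F m * monom_value m p)"
  unfolding mpeval_def monom_value_def[symmetric]
  by (rule sum.mono_neutral_left) (use assms in \<open>auto simp: in_keys_iff\<close>)

lemma mpeval_add: "mpeval (F + G) p = mpeval F p + mpeval G p"
proof -
  let ?S = "Poly_Mapping.keys F \<union> Poly_Mapping.keys G"
  have "mpeval (F + G) p = (\<Sum>m \<in> ?S. Poly_Mapping.lookup (F + G) m * monom_value m p)"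
    by (rule mpeval_superset) (auto dest: keys_add[THEN subsetD])
  also have "\<dots> = (\<Sum>m \<in> ?S. Poly_Mapping.lookup F m * monom_value m p)
                 + (\<Sum>m \<in> ?S. Poly_Mapping.lookup G m * monom_value m p)"
    by (simp add: lookup_add distrib_right sum.distrib)
  also have "\<dots> = mpeval F p + mpeval G p"
    by (subst (1 2) mpeval_superset[of _ ?S]) auto
  finally show ?thesis .
qed

lemma mpeval_sum: "mpeval (\<Sum>k\<in>A. G k) p = (\<Sum>k\<in>A. mpeval (G k) p)"
  by (induction A rule: infinite_finite_induct) (simp_all add: mpeval_add mpeval_def[of 0])

lemma mpeval_single: "mpeval (Poly_Mapping.single m c) p = c * monom_value m p"
  by (subst mpeval_superset[of _ "{m}"]) auto

definition monom2 :: "nat \<Rightarrow> nat \<Rightarrow> (nat \<Rightarrow>\<^sub>0 nat)" where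
  "monom2 i j = Poly_Mapping.single 0 i + Poly_Mapping.single 1 j"

lemma keys_monom2: "Poly_Mapping.keys (monom2 i j) \<subseteq> {0, 1}"
  unfolding monom2_def
  using keys_add[of "Poly_Mapping.single 0 i" "Poly_Mapping.single 1 j"]
  by (auto split: if_splits simp del: One_nat_def)

lemma monom_value_monom2: "monom_value (monom2 i j) p = p 0 ^ i * p 1 ^ j"
  by (subst monom_value_superset[OF keys_monom2]) (auto simp: monom2_def lookup_add lookup_single)

text \<open>The binomial expansion of X^n + c (X^n Y - a)^n, with X and Y the variables 0 and 1.\<close>
definition obstruction_mpoly :: "nat \<Rightarrow> 'a::comm_ring_1 \<Rightarrow> 'a \<Rightarrow> ((nat \<Rightarrow>\<^sub>0 nat) \<Rightarrow>\<^sub>0 'a)" where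
  "obstruction_mpoly n c a = Poly_Mapping.single (monom2 n 0) 1 +
     (\<Sum>k\<le>n. Poly_Mapping.single (monom2 (n * k) k) (c * of_nat (n choose k) * (- a) ^ (n - k)))"

lemma mpeval_obstruction_mpoly:
  "mpeval (obstruction_mpoly n c a) p = p 0 ^ n + c * (p 0 ^ n * p 1 - a) ^ n"
proof -
  have "(p 0 ^ n * p 1 - a) ^ n = (\<Sum>k\<le>n. of_nat (n choose k) * (p 0 ^ n * p 1) ^ k * (- a) ^ (n - k))"
    using binomial_ring[of "p 0 ^ n * p 1" "- a" n] by simp
  then have "c * (p 0 ^ n * p 1 - a) ^ n =
      (\<Sum>k\<le>n. c * of_nat (n choose k) * (- a) ^ (n - k) * (p 0 ^ (n * k) * p 1 ^ k))"
    by (simp add: sum_distrib_left power_mult[symmetric] power_mult_distrib mult_ac)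
  then show ?thesis
    unfolding obstruction_mpoly_def mpeval_add mpeval_sum mpeval_single monom_value_monom2
    by simp
qed

lemma in_vars_obstruction_mpoly: "in_vars 2 (obstruction_mpoly n c a)"
proof -
  let ?M = "{monom2 n 0} \<union> (\<Union>k\<le>n. {monom2 (n * k) k})"
  have keys_sum: "Poly_Mapping.keys (\<Sum>k\<le>n. Poly_Mapping.single (monom2 (n * k) k)
      (c * of_nat (n choose k) * (- a) ^ (n - k))) \<subseteq> (\<Union>k\<le>n. {monom2 (n * k) k})"
    using keys_sum[of "\<lambda>k. Poly_Mapping.single (monom2 (n * k) k)
      (c * of_nat (n choose k) * (- a) ^ (n - k))" "{..n}"] by auto
  have "Poly_Mapping.keys (Poly_Mapping.single (monom2 n 0) (1::'a)) \<subseteq> {monom2 n 0}"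
    by simp
  then have "Poly_Mapping.keys (obstruction_mpoly n c a) \<subseteq> ?M"
    unfolding obstruction_mpoly_def by (rule subset_trans[OF keys_add Un_mono[OF _ keys_sum]])
  moreover have "Poly_Mapping.keys m \<subseteq> {..<2}" if "m \<in> ?M" for m
    using that keys_monom2 by fastforce
  ultimately show ?thesis
    unfolding in_vars_def by blast
qed

text \<open>The disjunct f x y = 0 is the case where the maximum is the value v 0 = \<infinity>.\<close>
lemma extremal_bivariate:
  assumes "extremal v" "in_vars 2 F" "\<And>p. mpeval F p = f (p 0) (p 1)"
  shows "\<exists>x \<in> val_ring v. \<exists>y \<in> val_ring v. f x y = 0 \<or>
           (\<forall>x' \<in> val_ring v. \<forall>y' \<in> val_ring v. f x' y' \<noteq> 0 \<longrightarrow> v (f x' y') \<le> v (f x y))"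
proof -
  from assms(1,2) obtain p where p: "\<forall>i<2. p i \<in> val_ring v"
    and p_max: "mpeval F p = 0 \<or>
      (\<forall>b. (\<forall>i<2. b i \<in> val_ring v) \<and> mpeval F b \<noteq> 0 \<longrightarrow> v (mpeval F b) \<le> v (mpeval F p))"
    unfolding extremal_def by (metis one_le_numeral)
  have "v (f x' y') \<le> v (f (p 0) (p 1))"
    if "f (p 0) (p 1) \<noteq> 0" "x' \<in> val_ring v" "y' \<in> val_ring v" "f x' y' \<noteq> 0" for x' y'
  proof -
    let ?b = "\<lambda>i. if i = 0 then x' else y'"
    have "\<forall>i<2. ?b i \<in> val_ring v"
      using that(2,3) by (simp add: less_2_cases_iff)
    then show ?thesis
      using p_max that(1,4) by (auto simp: assms(3) dest!: spec[of _ ?b])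
  qed
  moreover have "p 0 \<in> val_ring v" "p 1 \<in> val_ring v"
    using p by auto
  ultimately show ?thesis by blast
qed

section \<open>Convex subgroups\<close>

lemma convex_subgroupD:
  assumes "convex_subgroup D"
  shows "0 \<in> D" "x \<in> D \<Longrightarrow> y \<in> D \<Longrightarrow> x + y \<in> D" "x \<in> D \<Longrightarrow> - x \<in> D"
    and "x \<in> D \<Longrightarrow> y \<in> D \<Longrightarrow> x \<le> z \<Longrightarrow> z \<le> y \<Longrightarrow> z \<in> D"
  using assms unfolding convex_subgroup_def by blast+

lemma convex_subgroup_ntimes:
  assumes "convex_subgroup D" "g \<in> D"
  shows "ntimes k g \<in> D"
  by (induction k) (simp_all add: convex_subgroupD(1,2)[OF assms(1)] assms(2))

lemma convex_subgroup_less_outside: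
  assumes "convex_subgroup D" "\<delta> \<in> D" "0 \<le> \<gamma>" "\<gamma> \<notin> D"
  shows "\<delta> < \<gamma>"
proof (rule ccontr)
  assume "\<not> \<delta> < \<gamma>"
  then have "\<gamma> \<in> D"
    using convex_subgroupD(4)[OF assms(1) convex_subgroupD(1)[OF assms(1)] assms(2,3)] by simp
  with assms(4) show False ..
qed

lemma convex_subgroup_pos_element:
  assumes "convex_subgroup D" "D \<noteq> {0}"
  obtains \<delta> where "\<delta> \<in> D" "0 < \<delta>"
proof -
  obtain e where e: "e \<in> D" "e \<noteq> 0"
    using assms convex_subgroupD(1)[OF assms(1)] by blast
  show ?thesis
  proof (cases "0 < e")
    case False
    then have "0 < - e"
      using e(2) by simp
    then show ?thesis
      using that convex_subgroupD(3)[OF assms(1) e(1)] by blast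
  qed (use that e in blast)
qed

lemma not_quotient_divisible_pos_witness:
  assumes "convex_subgroup D" "\<not> quotient_divisible D"
  obtains n :: nat and \<theta> :: "'g::linordered_ab_group_add"
  where "n \<ge> 1" "0 < \<theta>" "\<And>\<delta>. \<theta> - ntimes n \<delta> \<notin> D"
proof -
  obtain \<gamma> :: 'g and n where n: "n \<ge> 1" and \<gamma>: "\<And>\<delta>. \<gamma> - ntimes n \<delta> \<notin> D"
    using assms(2) unfolding quotient_divisible_def by blast
  have "\<gamma> \<noteq> 0"
    using \<gamma>[of 0] convex_subgroupD(1)[OF assms(1)] by auto
  show ?thesis
  proof (cases "0 < \<gamma>")
    case False
    have "0 < - \<gamma>"
      using False \<open>\<gamma> \<noteq> 0\<close> by simp
    moreover have "- \<gamma> - ntimes n \<delta> \<notin> D" for \<delta>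
    proof
      assume "- \<gamma> - ntimes n \<delta> \<in> D"
      from convex_subgroupD(3)[OF assms(1) this] have "\<gamma> - ntimes n (- \<delta>) \<in> D"
        by (simp add: sum_negf add.commute)
      with \<gamma> show False ..
    qed
    ultimately show ?thesis
      by (rule that[OF n])
  qed (rule that[OF n _ \<gamma>])
qed

section \<open>Valuations\<close>

lemma val_ring_iff: "x \<in> val_ring v \<longleftrightarrow> x = 0 \<or> 0 \<le> v x"
  by (simp add: val_ring_def)

locale valued_field =
  fixes v :: "'a::field \<Rightarrow> 'g::linordered_ab_group_add"
  assumes valuation: "valuation v"
begin

lemma v_mult: "x \<noteq> 0 \<Longrightarrow> y \<noteq> 0 \<Longrightarrow> v (x * y) = v x + v y"
  using valuation unfolding valuation_def by blast

lemma v_add: "x \<noteq> 0 \<Longrightarrow> y \<noteq> 0 \<Longrightarrow> x + y \<noteq> 0 \<Longrightarrow> min (v x) (v y) \<le> v (x + y)"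
  using valuation unfolding valuation_def by blast

lemma v_surj: obtains x where "x \<noteq> 0" "v x = g"
  using valuation unfolding valuation_def by (metis DiffE UNIV_I imageE singletonI)

lemma v_one: "v 1 = 0"
  using v_mult[of 1 1] by simp

lemma v_minus: "v (- x) = v x"
proof (cases "x = 0")
  case False
  have "v (-1) + v (-1) = 0"
    using v_mult[of "-1" "-1"] by (simp add: v_one)
  then show ?thesis
    using v_mult[of "-1" x] False by (simp add: double_zero)
qed simp

lemma v_power: "x \<noteq> 0 \<Longrightarrow> v (x ^ k) = ntimes k (v x)"
  by (induction k) (auto simp: v_one v_mult add.commute)

lemma v_divide: "x \<noteq> 0 \<Longrightarrow> y \<noteq> 0 \<Longrightarrow> v (x / y) = v x - v y"
  using v_mult[of "x / y" y] by (simp add: algebra_simps)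

lemma v_add_less:
  assumes "x \<noteq> 0" "y \<noteq> 0" "v x < v y"
  shows "x + y \<noteq> 0 \<and> v (x + y) = v x"
proof
  show nz: "x + y \<noteq> 0"
    using assms v_minus[of x] by (auto simp: add_eq_0_iff)
  have "min (v (x + y)) (v y) \<le> v x"
    using v_add[of "x + y" "- y"] nz assms(1,2) by (simp add: v_minus)
  then show "v (x + y) = v x"
    using v_add[OF assms(1,2) nz] assms(3) by (auto simp: min_le_iff_disj)
qed

lemma v_add_neq:
  assumes "x \<noteq> 0" "y \<noteq> 0" "v x \<noteq> v y"
  shows "x + y \<noteq> 0 \<and> v (x + y) = min (v x) (v y)"
  using v_add_less[OF assms(1,2)] v_add_less[OF assms(2,1)] assms(3)
  by (cases "v x < v y") (auto simp: add.commute)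

end

section \<open>The obstruction polynomial\<close>

locale obstruction_polynomial = valued_field v for v :: "'a::field \<Rightarrow> 'g::linordered_ab_group_add" +
  fixes n :: nat and a c :: 'a
  assumes n_pos: "n \<ge> 1"
    and a_nonzero: "a \<noteq> 0"
    and c_nonzero: "c \<noteq> 0"
    and v_c: "v c = - ntimes (Suc n) (v a)"
    and v_a_not_multiple: "\<And>\<alpha>. v a \<noteq> ntimes n \<alpha>"
begin

definition F :: "'a \<Rightarrow> 'a \<Rightarrow> 'a" where
  "F x y = x ^ n + c * (x ^ n * y - a) ^ n"

lemma F_one_a: "F 1 a = 1"
  using n_pos by (simp add: F_def)

lemma F_lift:
  assumes "x \<noteq> 0" "0 \<le> v x" "ntimes n (v x) \<le> v a"
  shows "a / x ^ n \<in> val_ring v" "F x (a / x ^ n) = x ^ n"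
proof -
  show "a / x ^ n \<in> val_ring v"
    using assms by (simp add: val_ring_iff v_divide a_nonzero v_power)
  show "F x (a / x ^ n) = x ^ n"
    using assms(1) n_pos by (simp add: F_def)
qed

lemma v_summands_differ:
  assumes "x \<noteq> 0" "Q \<noteq> 0"
  shows "v (x ^ n) \<noteq> v (c * Q ^ n)"
proof
  assume "v (x ^ n) = v (c * Q ^ n)"
  then have "ntimes n (v x) = ntimes n (v Q) - ntimes n (v a) - v a"
    using assms by (simp add: v_power v_mult c_nonzero v_c)
  then have "v a = ntimes n (v Q - v a - v x)"
    by (simp add: sum_subtractf sum.distrib algebra_simps)
  then show False
    using v_a_not_multiple by blast
qed

lemma v_shift_eq_v_a:
  assumes "x \<noteq> 0" "y \<in> val_ring v" "v a < ntimes n (v x)"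
  shows "v (x ^ n * y - a) = v a"
proof (cases "y = 0")
  case False
  have "v (- a) < v (x ^ n * y)"
    using assms False by (simp add: v_minus v_mult v_power val_ring_iff add_pos_nonneg
        add_less_le_mono[of _ _ 0 "v y", simplified])
  then show ?thesis
    using v_add_less[of "- a" "x ^ n * y"] a_nonzero False assms(1)
    by (simp add: v_minus add.commute)
qed (simp add: v_minus)

lemma F_nonzero_value_bound:
  assumes "x \<in> val_ring v" "y \<in> val_ring v"
  shows "F x y \<noteq> 0 \<and>
    ((x \<noteq> 0 \<and> ntimes n (v x) < v a \<and> v (F x y) \<le> ntimes n (v x)) \<or> v (F x y) \<le> - v a)"
proof -
  define Q where "Q = x ^ n * y - a"
  have F_Q: "F x y = x ^ n + c * Q ^ n"
    by (simp add: F_def Q_def)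
  consider "x = 0" | "x \<noteq> 0" "Q = 0" | "x \<noteq> 0" "Q \<noteq> 0"
    by blast
  then show ?thesis
  proof cases
    case 1
    then have "F x y = c * (- a) ^ n"
      unfolding F_Q Q_def using n_pos by (simp add: power_0_left)
    then show ?thesis
      using a_nonzero c_nonzero by (simp add: v_mult v_power v_minus v_c)
  next
    case 2
    then have "x ^ n * y = a" "y \<noteq> 0"
      using a_nonzero by (auto simp: Q_def)
    then have "v a = ntimes n (v x) + v y"
      using 2 by (metis v_mult v_power power_not_zero)
    moreover have "0 \<le> v y"
      using assms(2) \<open>y \<noteq> 0\<close> by (simp add: val_ring_iff)
    ultimately have "ntimes n (v x) < v a"
      using v_a_not_multiple[of "v x"] by simp
    then show ?thesis
      using 2 n_pos by (simp add: F_Q v_power power_0_left)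
  next
    case 3
    have "F x y \<noteq> 0" and v_F: "v (F x y) = min (ntimes n (v x)) (v (c * Q ^ n))"
      using v_add_neq[OF _ _ v_summands_differ[OF 3]] 3 c_nonzero by (auto simp: F_Q v_power)
    show ?thesis
    proof (cases "ntimes n (v x) < v a")
      case False
      then have "v a < ntimes n (v x)"
        using v_a_not_multiple[of "v x"] by auto
      then have "v (c * Q ^ n) = - v a"
        using 3 c_nonzero v_shift_eq_v_a[OF _ assms(2)]
        by (simp add: Q_def v_mult v_power v_c)
      then show ?thesis
        using \<open>F x y \<noteq> 0\<close> v_F by simp
    qed (use \<open>F x y \<noteq> 0\<close> v_F 3 in auto)
  qed
qed

lemma F_value_not_maximal:
  assumes "convex_subgroup D" "\<delta> \<in> D" "0 < \<delta>" "\<And>\<alpha>. v a - ntimes n \<alpha> \<notin> D"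
    and "x \<in> val_ring v" "x \<noteq> 0" "ntimes n (v x) < v a"
  obtains x' y' where "x' \<in> val_ring v" "y' \<in> val_ring v" "F x' y' \<noteq> 0"
    "ntimes n (v x) < v (F x' y')"
proof -
  obtain d where "d \<noteq> 0" "v d = \<delta>"
    by (rule v_surj)
  define x' where "x' = x * d"
  have x'_nonzero: "x' \<noteq> 0" and v_x': "v x' = v x + \<delta>"
    using assms(6) \<open>d \<noteq> 0\<close> \<open>v d = \<delta>\<close> by (simp_all add: x'_def v_mult)
  have "0 \<le> v x'"
    using assms(3,5,6) v_x' by (simp add: val_ring_iff add_nonneg_pos less_imp_le)
  have "ntimes n \<delta> < v a - ntimes n (v x)"
    using convex_subgroup_less_outside[OF assms(1) convex_subgroup_ntimes[OF assms(1,2)]]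
      assms(4,7) by simp
  then have "ntimes n (v x') \<le> v a"
    by (simp add: v_x' sum.distrib algebra_simps)
  note lift = F_lift[OF x'_nonzero \<open>0 \<le> v x'\<close> this]
  show ?thesis
  proof (rule that)
    show "x' \<in> val_ring v" "a / x' ^ n \<in> val_ring v"
      using \<open>0 \<le> v x'\<close> lift(1) by (simp_all add: val_ring_iff)
    show "F x' (a / x' ^ n) \<noteq> 0"
      using x'_nonzero by (simp add: lift(2))
    have "0 < ntimes n \<delta>"
      using assms(3) n_pos by (intro sum_pos) (auto simp: lessThan_empty_iff)
    then show "ntimes n (v x) < v (F x' (a / x' ^ n))"
      using x'_nonzero by (simp add: lift(2) v_power v_x' sum.distrib)
  qed
qed

lemma F_no_maximal_value:
  assumes "convex_subgroup D" "\<delta> \<in> D" "0 < \<delta>" "\<And>\<alpha>. v a - ntimes n \<alpha> \<notin> D" "0 < v a"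
    and "x \<in> val_ring v" "y \<in> val_ring v"
  obtains x' y' where "x' \<in> val_ring v" "y' \<in> val_ring v" "F x' y' \<noteq> 0"
    "v (F x y) < v (F x' y')"
proof -
  from F_nonzero_value_bound[OF assms(6,7)] consider
      (small) "x \<noteq> 0" "ntimes n (v x) < v a" "v (F x y) \<le> ntimes n (v x)"
    | (large) "v (F x y) \<le> - v a"
    by blast
  then show ?thesis
  proof cases
    case small
    then obtain x' y' where "x' \<in> val_ring v" "y' \<in> val_ring v" "F x' y' \<noteq> 0"
      "ntimes n (v x) < v (F x' y')"
      using F_value_not_maximal[OF assms(1-4,6) small(1,2)] by blast
    then show ?thesis
      using that order.strict_trans1[OF small(3)] by blast
  next
    case large
    have less: "v (F x y) < v (F 1 a)"
      using order.strict_trans1[OF large] assms(5) by (simp add: F_one_a v_one)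
    show ?thesis
      by (rule that[OF _ _ _ less])
        (use assms(5) in \<open>simp_all add: F_one_a val_ring_iff v_one less_imp_le\<close>)
  qed
qed

end

theorem proposition3p5:
  fixes v :: "'a::field \<Rightarrow> 'g::linordered_ab_group_add"
    and D :: "'g set"
  assumes "valuation v"
    and "extremal v"
    and "convex_subgroup D"
    and "D \<noteq> {0}"
  shows "quotient_divisible D"
proof (rule ccontr)
  assume "\<not> quotient_divisible D"
  then obtain n and \<theta> :: 'g
    where n: "n \<ge> 1" and "0 < \<theta>" and \<theta>: "\<And>\<delta>. \<theta> - ntimes n \<delta> \<notin> D"
    using not_quotient_divisible_pos_witness[OF assms(3)] by blast
  obtain \<delta> where "\<delta> \<in> D" "0 < \<delta>"
    using convex_subgroup_pos_element[OF assms(3,4)] by blast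
  interpret valued_field v
    by unfold_locales fact
  obtain a c where a: "a \<noteq> 0" "v a = \<theta>" and c: "c \<noteq> 0" "v c = - ntimes (Suc n) \<theta>"
    by (metis v_surj)
  have "\<theta> \<noteq> ntimes n \<alpha>" for \<alpha>
    using \<theta>[of \<alpha>] convex_subgroupD(1)[OF assms(3)] by auto
  interpret obstruction_polynomial v n a c
    using n a c \<open>\<And>\<alpha>. \<theta> \<noteq> ntimes n \<alpha>\<close> by unfold_locales simp_all
  have F_eval: "mpeval (obstruction_mpoly n c a) p = F (p 0) (p 1)" for p
    by (simp add: mpeval_obstruction_mpoly F_def)
  obtain x y where xy: "x \<in> val_ring v" "y \<in> val_ring v" and "F x y = 0 \<or>
      (\<forall>x' \<in> val_ring v. \<forall>y' \<in> val_ring v. F x' y' \<noteq> 0 \<longrightarrow> v (F x' y') \<le> v (F x y))"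
    using extremal_bivariate[OF assms(2) in_vars_obstruction_mpoly F_eval] by blast
  moreover have "F x y \<noteq> 0"
    using F_nonzero_value_bound[OF xy] by blast
  moreover obtain x' y' where "x' \<in> val_ring v" "y' \<in> val_ring v" "F x' y' \<noteq> 0"
    "v (F x y) < v (F x' y')"
    using F_no_maximal_value[OF assms(3) \<open>\<delta> \<in> D\<close> \<open>0 < \<delta>\<close> \<theta>[folded a(2)] _ xy] a \<open>0 < \<theta>\<close>
    by blast
  ultimately show False
    by (meson leD)
qed

end
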